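(* Let $G=(V,E)$ be a finite block graph. If $G$ is identifiable (no distinct vertices $u,v$ with $N[u]=N[v]$), then $\gamma^{LD}(G)\leq n_Q(G)$; otherwise $\gamma^{LD}(G)\leq |V|-1$. Here $n_Q(G)$ is the number of maximal cliques of $G$.
   Context: A block graph is a graph in which every maximal 2-connected subgraph (block) is a clique. For a vertex $u$, $N(u)$ is its open neighborhood and $N[u]=N(u)\cup\{u\}$ its closed neighborhood. A set $C\subseteq V$ is a locating-dominating code (LD-code) if $N[u]\cap C\neq\emptyset$ for every vertex $u$ and $N(u)\cap C\neq N(v)\cap C$ for all distinct $u,v\in V\setminus C$. $\gamma^{LD}(G)$ is the minimum cardinality of an LD-code of $G$. *)

theory Defs
  imports Main
begin

definition simple_graph :: "'a set \<Rightarrow> ('a \<Rightarrow> 'a \<Rightarrow> bool) \<Rightarrow> bool" where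
  "simple_graph V adj \<longleftrightarrow> finite V \<and> (\<forall>x y. adj x y \<longrightarrow> x \<in> V \<and> y \<in> V)
     \<and> (\<forall>x y. adj x y \<longrightarrow> adj y x) \<and> (\<forall>x. \<not> adj x x)"

definition open_nbhd :: "'a set \<Rightarrow> ('a \<Rightarrow> 'a \<Rightarrow> bool) \<Rightarrow> 'a \<Rightarrow> 'a set" where
  "open_nbhd V adj u = {v \<in> V. adj u v}"

definition closed_nbhd :: "'a set \<Rightarrow> ('a \<Rightarrow> 'a \<Rightarrow> bool) \<Rightarrow> 'a \<Rightarrow> 'a set" where
  "closed_nbhd V adj u = insert u (open_nbhd V adj u)"

definition connected_on :: "('a \<Rightarrow> 'a \<Rightarrow> bool) \<Rightarrow> 'a set \<Rightarrow> bool" where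
  "connected_on adj S \<longleftrightarrow>
     (\<forall>x\<in>S. \<forall>y\<in>S. (\<lambda>a b. a \<in> S \<and> b \<in> S \<and> adj a b)\<^sup>*\<^sup>* x y)"

definition two_connected_on :: "'a set \<Rightarrow> ('a \<Rightarrow> 'a \<Rightarrow> bool) \<Rightarrow> 'a set \<Rightarrow> bool" where
  "two_connected_on V adj S \<longleftrightarrow> S \<subseteq> V \<and> card S \<ge> 3 \<and> connected_on adj S
     \<and> (\<forall>x\<in>S. connected_on adj (S - {x}))"

definition is_block :: "'a set \<Rightarrow> ('a \<Rightarrow> 'a \<Rightarrow> bool) \<Rightarrow> 'a set \<Rightarrow> bool" where
  "is_block V adj S \<longleftrightarrow> two_connected_on V adj S
     \<and> (\<forall>T. two_connected_on V adj T \<and> S \<subseteq> T \<longrightarrow> T = S)"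

definition is_clique :: "'a set \<Rightarrow> ('a \<Rightarrow> 'a \<Rightarrow> bool) \<Rightarrow> 'a set \<Rightarrow> bool" where
  "is_clique V adj S \<longleftrightarrow> S \<subseteq> V \<and> (\<forall>x\<in>S. \<forall>y\<in>S. x \<noteq> y \<longrightarrow> adj x y)"

definition block_graph :: "'a set \<Rightarrow> ('a \<Rightarrow> 'a \<Rightarrow> bool) \<Rightarrow> bool" where
  "block_graph V adj \<longleftrightarrow> simple_graph V adj \<and> (\<forall>S. is_block V adj S \<longrightarrow> is_clique V adj S)"

definition is_max_clique :: "'a set \<Rightarrow> ('a \<Rightarrow> 'a \<Rightarrow> bool) \<Rightarrow> 'a set \<Rightarrow> bool" where
  "is_max_clique V adj S \<longleftrightarrow> S \<noteq> {} \<and> is_clique V adj S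
     \<and> (\<forall>T. is_clique V adj T \<and> S \<subseteq> T \<longrightarrow> T = S)"

definition n_Q :: "'a set \<Rightarrow> ('a \<Rightarrow> 'a \<Rightarrow> bool) \<Rightarrow> nat" where
  "n_Q V adj = card {S. is_max_clique V adj S}"

definition identifiable :: "'a set \<Rightarrow> ('a \<Rightarrow> 'a \<Rightarrow> bool) \<Rightarrow> bool" where
  "identifiable V adj \<longleftrightarrow>
     (\<forall>u\<in>V. \<forall>v\<in>V. u \<noteq> v \<longrightarrow> closed_nbhd V adj u \<noteq> closed_nbhd V adj v)"

definition LD_code :: "'a set \<Rightarrow> ('a \<Rightarrow> 'a \<Rightarrow> bool) \<Rightarrow> 'a set \<Rightarrow> bool" where
  "LD_code V adj C \<longleftrightarrow> C \<subseteq> V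
     \<and> (\<forall>u\<in>V. closed_nbhd V adj u \<inter> C \<noteq> {})
     \<and> (\<forall>u\<in>V - C. \<forall>v\<in>V - C. u \<noteq> v \<longrightarrow> open_nbhd V adj u \<inter> C \<noteq> open_nbhd V adj v \<inter> C)"

definition gamma_LD :: "'a set \<Rightarrow> ('a \<Rightarrow> 'a \<Rightarrow> bool) \<Rightarrow> nat" where
  "gamma_LD V adj = Min {card C | C. LD_code V adj C}"

end

theory Submission
  imports Defs
begin

text \<open>Root each connected component and let the level of a vertex be its distance to the root.
  In a block graph every cycle spans a clique. Hence two nonadjacent vertices have at most one
  common neighbour, two maximal cliques share at most one vertex, and a path whose ends lie on
  its lowest level spans a clique, so every vertex lies in at most one maximal clique that
  reaches a lower level. Pick in every maximal clique a vertex of maximal level: these at most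
  \<open>n_Q\<close> vertices dominate the graph, and for identifiable graphs the facts above show that
  distinct non-code vertices see different code vertices. In a non-identifiable graph some
  vertex has a neighbour, and all other vertices form an LD-code.\<close>

lemma connected_on_insert:
  assumes conn: "connected_on adj S" and y: "y \<in> S" and "adj x y" "adj y x"
  shows "connected_on adj (insert x S)"
proof -
  let ?R = "\<lambda>T a b. a \<in> T \<and> b \<in> T \<and> adj a b"
  have sub: "?R S \<le> ?R (insert x S)"
    by auto
  have old: "(?R (insert x S))\<^sup>*\<^sup>* a b" if "a \<in> S" "b \<in> S" for a b
  proof -
    have "(?R S)\<^sup>*\<^sup>* a b"
      using conn that unfolding connected_on_def by blast
    then show ?thesis
      by (rule predicate2D[OF rtranclp_mono[OF sub]])
  qed
  have step: "?R (insert x S) x y" "?R (insert x S) y x"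
    using assms by auto
  have "(?R (insert x S))\<^sup>*\<^sup>* x b" if "b \<in> S" for b
    using converse_rtranclp_into_rtranclp[OF step(1) old[OF y that]] .
  moreover have "(?R (insert x S))\<^sup>*\<^sup>* b x" if "b \<in> S" for b
    using rtranclp.rtrancl_into_rtrancl[OF old[OF that y] step(2)] .
  ultimately show ?thesis
    using old unfolding connected_on_def by blast
qed

lemma hd_neq_last: "distinct xs \<Longrightarrow> 2 \<le> length xs \<Longrightarrow> hd xs \<noteq> last xs"
  by (cases xs) auto

lemma gamma_LD_le:
  assumes "finite V" "LD_code V adj C"
  shows "gamma_LD V adj \<le> card C"
proof -
  have "{card C | C. LD_code V adj C} \<subseteq> card ` Pow V"
    unfolding LD_code_def by auto
  then have "finite {card C | C. LD_code V adj C}"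
    using assms(1) finite_subset by blast
  then show ?thesis
    unfolding gamma_LD_def using assms(2) by (intro Min_le) auto
qed

lemma clique_subset: "is_clique V adj S \<Longrightarrow> T \<subseteq> S \<Longrightarrow> is_clique V adj T"
  unfolding is_clique_def by blast

locale sgraph =
  fixes V :: "'a set" and adj :: "'a \<Rightarrow> 'a \<Rightarrow> bool"
  assumes simple: "simple_graph V adj"
begin

lemma finite_V: "finite V"
  using simple unfolding simple_graph_def by auto

lemma adj_in_V: "adj x y \<Longrightarrow> x \<in> V \<and> y \<in> V"
  using simple unfolding simple_graph_def by auto

lemma adj_sym: "adj x y \<Longrightarrow> adj y x"
  using simple unfolding simple_graph_def by auto

lemma adj_neq: "adj x y \<Longrightarrow> x \<noteq> y"
  using simple unfolding simple_graph_def by auto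

lemma connected_on_path: "successively adj xs \<Longrightarrow> connected_on adj (set xs)"
proof (induction xs rule: induct_list012)
  case (3 x y zs)
  then show ?case
    using connected_on_insert[of adj "set (y # zs)" y x] adj_sym by auto
qed (auto simp: connected_on_def)

lemma path_in_V: "successively adj xs \<Longrightarrow> 2 \<le> length xs \<Longrightarrow> set xs \<subseteq> V"
proof (induction xs rule: induct_list012)
  case (3 x y zs)
  then have "adj x y" "successively adj (y # zs)"
    by auto
  moreover have "set zs \<subseteq> V"
    using 3 by (cases zs) auto
  ultimately show ?case
    using adj_in_V by auto
qed auto

lemma path_rtranclp: "successively adj xs \<Longrightarrow> xs \<noteq> [] \<Longrightarrow> adj\<^sup>*\<^sup>* (hd xs) (last xs)"
  by (induction xs rule: induct_list012) auto

lemma ex_max_clique: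
  assumes "is_clique V adj S" "S \<noteq> {}"
  obtains Q where "is_max_clique V adj Q" "S \<subseteq> Q"
proof -
  have "finite {T. is_clique V adj T}"
    by (rule finite_subset[of _ "Pow V"]) (auto simp: is_clique_def finite_V)
  then obtain Q where "is_clique V adj Q" "S \<subseteq> Q"
      "\<forall>T. is_clique V adj T \<longrightarrow> Q \<subseteq> T \<longrightarrow> Q = T"
    using finite_has_maximal2[of "{T. is_clique V adj T}" S] assms by auto
  with assms that show ?thesis
    unfolding is_max_clique_def by blast
qed

lemma ex_max_clique_vertex:
  assumes "u \<in> V"
  obtains Q where "is_max_clique V adj Q" "u \<in> Q"
  using ex_max_clique[of "{u}"] assms unfolding is_clique_def by auto

lemma ex_max_clique_edge:
  assumes "adj u v"
  obtains Q where "is_max_clique V adj Q" "u \<in> Q" "v \<in> Q"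
proof -
  have "is_clique V adj {u, v}"
    using assms adj_in_V adj_sym unfolding is_clique_def by auto
  then obtain Q where "is_max_clique V adj Q" "{u, v} \<subseteq> Q"
    by (rule ex_max_clique) simp
  then show ?thesis
    using that by simp
qed

lemma max_clique_adj:
  "is_max_clique V adj Q \<Longrightarrow> x \<in> Q \<Longrightarrow> y \<in> Q \<Longrightarrow> x \<noteq> y \<Longrightarrow> adj x y"
  unfolding is_max_clique_def is_clique_def by auto

lemma max_clique_maximal:
  "is_max_clique V adj Q \<Longrightarrow> is_clique V adj T \<Longrightarrow> Q \<subseteq> T \<Longrightarrow> T = Q"
  unfolding is_max_clique_def by blast

lemma max_clique_subset: "is_max_clique V adj Q \<Longrightarrow> Q \<subseteq> V"
  unfolding is_max_clique_def is_clique_def by blast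

lemma finite_max_cliques: "finite {Q. is_max_clique V adj Q}"
  by (rule finite_subset[of _ "Pow V"])
    (auto simp: is_max_clique_def is_clique_def finite_V)

lemma finite_max_clique: "is_max_clique V adj Q \<Longrightarrow> finite Q"
  unfolding is_max_clique_def is_clique_def using finite_V finite_subset by blast

lemma LD_code_remove_vertex:
  assumes "adj u v"
  shows "LD_code V adj (V - {u})"
  unfolding LD_code_def
proof (intro conjI ballI impI)
  fix x assume "x \<in> V"
  have "v \<in> closed_nbhd V adj u \<inter> (V - {u})"
    using assms adj_in_V adj_neq unfolding closed_nbhd_def open_nbhd_def by auto
  moreover have "x \<in> closed_nbhd V adj x \<inter> (V - {u})" if "x \<noteq> u"
    using \<open>x \<in> V\<close> that unfolding closed_nbhd_def by auto
  ultimately show "closed_nbhd V adj x \<inter> (V - {u}) \<noteq> {}"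
    by (cases "x = u") auto
qed auto

lemma not_identifiable_ex_adj:
  assumes "\<not> identifiable V adj"
  obtains u v where "adj u v"
proof -
  obtain u v where uv: "u \<noteq> v" "closed_nbhd V adj u = closed_nbhd V adj v"
    using assms unfolding identifiable_def by blast
  have "v \<in> closed_nbhd V adj v"
    unfolding closed_nbhd_def by simp
  with uv(2) have "v \<in> closed_nbhd V adj u"
    by simp
  with uv(1) have "adj u v"
    unfolding closed_nbhd_def open_nbhd_def by simp
  then show ?thesis
    by (rule that)
qed

text \<open>The choice below depends only on the connected component of \<open>v\<close>, so it fixes one root
  per component; \<open>level v\<close> is then the BFS layer of \<open>v\<close>.\<close>

definition comp_root :: "'a \<Rightarrow> 'a" where
  "comp_root v = (SOME r. adj\<^sup>*\<^sup>* v r)"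

definition level :: "'a \<Rightarrow> nat" where
  "level v = (LEAST n. (adj ^^ n) (comp_root v) v)"

lemma rtranclp_adj_sym: "adj\<^sup>*\<^sup>* u v \<Longrightarrow> adj\<^sup>*\<^sup>* v u"
proof -
  have "symp adj"
    using adj_sym by (rule sympI)
  then show "adj\<^sup>*\<^sup>* u v \<Longrightarrow> adj\<^sup>*\<^sup>* v u"
    by (rule sympD[OF symp_rtranclp])
qed

lemma comp_root_eq:
  assumes "adj\<^sup>*\<^sup>* u v"
  shows "comp_root u = comp_root v"
proof -
  have "adj\<^sup>*\<^sup>* u = adj\<^sup>*\<^sup>* v"
  proof
    fix w
    show "adj\<^sup>*\<^sup>* u w = adj\<^sup>*\<^sup>* v w"
      using assms rtranclp_adj_sym[OF assms] rtranclp_trans[of adj] by blast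
  qed
  then show ?thesis
    unfolding comp_root_def by simp
qed

lemma level_walk: "(adj ^^ level v) (comp_root v) v"
proof -
  have "adj\<^sup>*\<^sup>* (comp_root v) v"
    unfolding comp_root_def by (rule rtranclp_adj_sym, rule someI[of _ v]) simp
  then have "\<exists>n. (adj ^^ n) (comp_root v) v"
    by (rule rtranclp_imp_relpowp)
  then show ?thesis
    unfolding level_def by (rule LeastI_ex)
qed

lemma level_le: "(adj ^^ n) (comp_root v) v \<Longrightarrow> level v \<le> n"
  unfolding level_def by (rule Least_le)

lemma level_0: "level v = 0 \<Longrightarrow> comp_root v = v"
  using level_walk[of v] by simp

lemma eq_if_level_0:
  "adj\<^sup>*\<^sup>* u v \<Longrightarrow> level u = 0 \<Longrightarrow> level v = 0 \<Longrightarrow> u = v"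
  using comp_root_eq level_0 by metis

lemma level_adj_le:
  assumes "adj u v"
  shows "level v \<le> Suc (level u)"
proof -
  have "comp_root u = comp_root v"
    using assms by (intro comp_root_eq) auto
  then have "(adj ^^ Suc (level u)) (comp_root v) v"
    using relpowp_Suc_I[OF level_walk assms] by simp
  then show ?thesis
    by (rule level_le)
qed

lemma ex_parent:
  assumes "0 < level v"
  obtains p where "adj v p" "Suc (level p) = level v"
proof -
  obtain n where n: "level v = Suc n"
    using assms gr0_implies_Suc by blast
  then obtain p where p: "(adj ^^ n) (comp_root v) p" "adj p v"
    using level_walk[of v] by (metis relpowp_Suc_E)
  moreover have "comp_root p = comp_root v"
    using p by (intro comp_root_eq) auto
  ultimately have "level p \<le> n"
    using level_le by simp
  with p n level_adj_le[of p v] show ?thesis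
    using that adj_sym by fastforce
qed

lemma ex_lower_max_clique:
  assumes "0 < level v"
  obtains P p where "is_max_clique V adj P" "v \<in> P" "p \<in> P" "level p < level v"
proof -
  obtain p where p: "adj v p" "Suc (level p) = level v"
    using ex_parent assms by blast
  then obtain P where "is_max_clique V adj P" "v \<in> P" "p \<in> P"
    using ex_max_clique_edge by blast
  with p that show ?thesis by simp
qed

definition deepest :: "'a set \<Rightarrow> 'a" where
  "deepest Q = arg_max_on level Q"

definition deepest_code :: "'a set" where
  "deepest_code = deepest ` {Q. is_max_clique V adj Q}"

lemma deepest:
  assumes "is_max_clique V adj Q"
  shows deepest_in: "deepest Q \<in> Q"
    and level_le_deepest: "y \<in> Q \<Longrightarrow> level y \<le> level (deepest Q)"
proof -
  obtain q where "q \<in> Q"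
    using assms unfolding is_max_clique_def by blast
  moreover have "\<forall>y. y \<in> Q \<longrightarrow> level y < Suc (Max (level ` Q))"
    using finite_max_clique[OF assms] by (simp add: le_imp_less_Suc)
  ultimately have "deepest Q \<in> Q \<and> (\<forall>y. y \<in> Q \<longrightarrow> level y \<le> level (deepest Q))"
    unfolding deepest_def arg_max_on_def by (rule arg_max_nat_lemma)
  then show "deepest Q \<in> Q" "y \<in> Q \<Longrightarrow> level y \<le> level (deepest Q)"
    by auto
qed

lemma card_deepest_code: "card deepest_code \<le> n_Q V adj"
  unfolding deepest_code_def n_Q_def by (rule card_image_le[OF finite_max_cliques])

lemma deepest_code_subset: "deepest_code \<subseteq> V"
  unfolding deepest_code_def using deepest_in max_clique_subset by blast

lemma deepest_code_nbhd:
  assumes "is_max_clique V adj Q" "u \<in> Q" "u \<notin> deepest_code"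
  shows "deepest Q \<in> open_nbhd V adj u \<inter> deepest_code"
proof -
  have "deepest Q \<in> deepest_code"
    unfolding deepest_code_def using assms(1) by blast
  moreover have "adj u (deepest Q)"
    using assms deepest_in max_clique_adj calculation by metis
  ultimately show ?thesis
    unfolding open_nbhd_def using adj_in_V by blast
qed

end

locale bgraph = sgraph +
  assumes block_clique: "is_block V adj S \<Longrightarrow> is_clique V adj S"
begin

lemma two_connected_clique:
  assumes "two_connected_on V adj S"
  shows "is_clique V adj S"
proof -
  have "finite {T. two_connected_on V adj T}"
    by (rule finite_subset[of _ "Pow V"]) (auto simp: two_connected_on_def finite_V)
  then obtain B where "two_connected_on V adj B" "S \<subseteq> B"
      "\<forall>T. two_connected_on V adj T \<longrightarrow> B \<subseteq> T \<longrightarrow> B = T"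
    using finite_has_maximal2[of "{T. two_connected_on V adj T}" S] assms by auto
  then have "is_block V adj B"
    unfolding is_block_def by auto
  with \<open>S \<subseteq> B\<close> show ?thesis
    using block_clique clique_subset by blast
qed

lemma cycle_clique:
  assumes dist: "distinct xs" and len: "3 \<le> length xs"
    and path: "successively adj xs" and closing: "adj (last xs) (hd xs)"
  shows "is_clique V adj (set xs)"
proof -
  have "connected_on adj (set xs - {x})" if x: "x \<in> set xs" for x
  proof -
    obtain ys zs where xs: "xs = ys @ x # zs"
      using split_list[OF x] by blast
    have rest: "set xs - {x} = set (zs @ ys)"
      using dist xs by auto
    have "successively adj ys" "successively adj (x # zs)"
      using path unfolding xs successively_append_iff by blast+
    moreover have "adj (last zs) (hd ys)" if "zs \<noteq> []" "ys \<noteq> []"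
      using closing that unfolding xs by simp
    ultimately have "successively adj (zs @ ys)"
      unfolding successively_append_iff successively_Cons by auto
    then show ?thesis
      unfolding rest by (rule connected_on_path)
  qed
  moreover have "set xs \<subseteq> V"
    using path_in_V path len by simp
  ultimately have "two_connected_on V adj (set xs)"
    unfolding two_connected_on_def
    using connected_on_path[OF path] dist len by (simp add: distinct_card)
  then show ?thesis
    by (rule two_connected_clique)
qed

lemma common_neighbour_unique:
  assumes "u \<noteq> v" "\<not> adj u v"
    and "adj u w1" "adj v w1" "adj u w2" "adj v w2"
  shows "w1 = w2"
proof (rule ccontr)
  assume "w1 \<noteq> w2"
  then have "is_clique V adj (set [u, w1, v, w2])"
    using assms adj_neq adj_sym by (intro cycle_clique) auto
  with assms show False
    unfolding is_clique_def by auto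
qed

text \<open>The induction step descends one level from both ends: equal parents close a cycle,
  distinct parents give a longer path one level lower.\<close>

lemma level_path_clique:
  assumes "distinct xs" "2 \<le> length xs" "successively adj xs"
    and "level (hd xs) = k" "level (last xs) = k" "\<forall>x\<in>set xs. k \<le> level x"
  shows "is_clique V adj (set xs)"
  using assms
proof (induction k arbitrary: xs)
  case 0
  have "hd xs = last xs"
    using 0 path_rtranclp eq_if_level_0 by fastforce
  with 0 show ?case
    using hd_neq_last by blast
next
  case (Suc k)
  have ne: "xs \<noteq> []"
    using Suc.prems by auto
  obtain q1 where q1: "adj (hd xs) q1" "level q1 = k"
    using ex_parent[of "hd xs"] Suc.prems by auto
  obtain q2 where q2: "adj (last xs) q2" "level q2 = k"
    using ex_parent[of "last xs"] Suc.prems by auto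
  have out: "q1 \<notin> set xs" "q2 \<notin> set xs"
    using Suc.prems q1 q2 by fastforce+
  show ?case
  proof (cases "q1 = q2")
    case True
    have "is_clique V adj (set (q1 # xs))"
      using Suc.prems q1 q2 out True ne adj_sym
      by (intro cycle_clique) (auto simp: successively_Cons)
    then show ?thesis
      using clique_subset by fastforce
  next
    case False
    have "is_clique V adj (set (q1 # xs @ [q2]))"
      using Suc.prems q1 q2 out False ne adj_sym
      by (intro Suc.IH) (auto simp: successively_Cons successively_append_iff hd_append)
    then show ?thesis
      using clique_subset by fastforce
  qed
qed

lemma max_cliques_eq_edge:
  assumes Q1: "is_max_clique V adj Q1" and Q2: "is_max_clique V adj Q2"
    and "a \<noteq> b" "a \<in> Q1" "b \<in> Q1" "a \<in> Q2" "b \<in> Q2"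
  shows "Q1 = Q2"
proof (rule ccontr)
  assume "Q1 \<noteq> Q2"
  then have "\<not> is_clique V adj (Q1 \<union> Q2)"
    using max_clique_maximal[OF Q1] max_clique_maximal[OF Q2] by (metis sup_ge1 sup_ge2)
  moreover have "Q1 \<union> Q2 \<subseteq> V"
    using max_clique_subset Q1 Q2 by blast
  ultimately obtain x y where xy: "x \<in> Q1 \<union> Q2" "y \<in> Q1 \<union> Q2" "x \<noteq> y" "\<not> adj x y"
    unfolding is_clique_def by blast
  have nb: "adj z c" if "z \<in> Q1 \<union> Q2" "c \<in> {a, b}" "z \<noteq> c" for z c
    using that assms max_clique_adj[OF Q1] max_clique_adj[OF Q2] by auto
  have "x \<notin> {a, b}" "y \<notin> {a, b}"
    using nb[of y x] nb[of x y] xy adj_sym by auto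
  then have "adj x a" "adj y a" "adj x b" "adj y b"
    using nb xy by auto
  then show False
    using common_neighbour_unique[OF xy(3,4)] \<open>a \<noteq> b\<close> by blast
qed

lemma max_cliques_eq_triangle:
  assumes Q: "is_max_clique V adj Q" and R: "is_max_clique V adj R"
    and "x \<in> Q" "x \<in> R" "y \<in> Q" "z \<in> R" "y \<noteq> x" "z \<noteq> x" "adj y z"
  shows "Q = R"
proof -
  have "adj x y" "adj x z"
    using assms max_clique_adj by auto
  with \<open>adj y z\<close> have "is_clique V adj {x, y, z}"
    using adj_in_V adj_sym unfolding is_clique_def by auto
  then obtain K where K: "is_max_clique V adj K" "{x, y, z} \<subseteq> K"
    using ex_max_clique by blast
  then have "K = Q" "K = R"
    using assms max_cliques_eq_edge by (metis insert_subset)+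
  then show ?thesis by simp
qed

lemma lower_max_clique_unique:
  assumes Q1: "is_max_clique V adj Q1" and Q2: "is_max_clique V adj Q2"
    and "x \<in> Q1" "x \<in> Q2" "y1 \<in> Q1" "y2 \<in> Q2" "level y1 < level x" "level y2 < level x"
  shows "Q1 = Q2"
proof (cases "y1 = y2")
  case True
  with assms show ?thesis
    using max_cliques_eq_edge[OF Q1 Q2, of x y1] by auto
next
  case False
  have adj: "adj y1 x" "adj x y2"
    using assms max_clique_adj by auto
  then have "level y1 = level y2"
    using assms level_adj_le[of y1 x] level_adj_le[of y2 x] adj_sym by fastforce
  then have "is_clique V adj (set [y1, x, y2])"
    using assms adj False by (intro level_path_clique[of _ "level y1"]) auto
  then have "adj y1 y2"
    using False unfolding is_clique_def by simp
  with assms show ?thesis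
    using max_cliques_eq_triangle[OF Q1 Q2] by auto
qed

lemma deepest_code_separates_adjacent:
  assumes "u \<notin> deepest_code" "adj u v" "adj u w" "w \<noteq> v" "\<not> adj v w"
  shows "open_nbhd V adj u \<inter> deepest_code \<noteq> open_nbhd V adj v \<inter> deepest_code"
proof
  assume eq: "open_nbhd V adj u \<inter> deepest_code = open_nbhd V adj v \<inter> deepest_code"
  obtain Q where Q: "is_max_clique V adj Q" "u \<in> Q" "v \<in> Q"
    using ex_max_clique_edge[OF \<open>adj u v\<close>] by blast
  obtain R where R: "is_max_clique V adj R" "u \<in> R" "w \<in> R"
    using ex_max_clique_edge[OF \<open>adj u w\<close>] by blast
  have r: "deepest R \<in> open_nbhd V adj u \<inter> deepest_code"
    using deepest_code_nbhd[OF R(1,2)] assms(1) .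
  then have "adj v (deepest R)"
    using eq unfolding open_nbhd_def by blast
  moreover have "deepest R \<noteq> u" "v \<noteq> u"
    using r assms(1,2) adj_neq by auto
  ultimately have "Q = R"
    using max_cliques_eq_triangle[OF Q(1) R(1) Q(2) R(2) Q(3) deepest_in[OF R(1)]] by blast
  then show False
    using max_clique_adj[OF Q(1) Q(3)] R(3) assms(4,5) by blast
qed

lemma common_code_neighbour:
  assumes "u \<in> V" "u \<notin> deepest_code" "v \<notin> deepest_code" "u \<noteq> v" "\<not> adj u v"
    and eq: "open_nbhd V adj u \<inter> deepest_code = open_nbhd V adj v \<inter> deepest_code"
  obtains w where "adj u w" "adj v w"
    "\<And>P x. is_max_clique V adj P \<Longrightarrow> x \<in> P \<Longrightarrow> x = u \<or> x = v \<Longrightarrow> deepest P = w"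
proof -
  obtain Q where "is_max_clique V adj Q" "u \<in> Q"
    using ex_max_clique_vertex[OF \<open>u \<in> V\<close>] by blast
  define w where "w = deepest Q"
  have w: "w \<in> open_nbhd V adj u \<inter> deepest_code"
    unfolding w_def by (rule deepest_code_nbhd) fact+
  then have adj_w: "adj u w" "adj v w"
    using eq unfolding open_nbhd_def by auto
  have unique: "c = w" if "c \<in> open_nbhd V adj u \<inter> deepest_code" for c
    using that eq adj_w common_neighbour_unique[OF \<open>u \<noteq> v\<close> \<open>\<not> adj u v\<close>]
    unfolding open_nbhd_def by blast
  have "deepest P = w" if "is_max_clique V adj P" "x \<in> P" "x = u \<or> x = v" for P x
    using deepest_code_nbhd[OF that(1,2)] that(3) assms(2,3) eq unique by blast
  with adj_w that show ?thesis
    by blast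
qed

lemma deepest_code_separates_nonadjacent:
  assumes "u \<in> V" "u \<notin> deepest_code" "v \<notin> deepest_code" "u \<noteq> v" "\<not> adj u v"
    and "level u \<le> level v"
  shows "open_nbhd V adj u \<inter> deepest_code \<noteq> open_nbhd V adj v \<inter> deepest_code"
proof
  assume "open_nbhd V adj u \<inter> deepest_code = open_nbhd V adj v \<inter> deepest_code"
  then obtain w where adj_w: "adj u w" "adj v w" and deepest_w:
      "\<And>P x. is_max_clique V adj P \<Longrightarrow> x \<in> P \<Longrightarrow> x = u \<or> x = v \<Longrightarrow> deepest P = w"
    using common_code_neighbour assms by blast
  show False
  proof (cases "level v = 0")
    case True
    have "adj\<^sup>*\<^sup>* u v"
      using adj_w adj_sym by (meson r_into_rtranclp rtranclp_trans)
    then show False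
      using eq_if_level_0 True assms(4,6) by simp
  next
    case False
    then obtain P' p' where P': "is_max_clique V adj P'" "v \<in> P'" "p' \<in> P'" "level p' < level v"
      using ex_lower_max_clique by blast
    then have w_P': "w \<in> P'" and "level v \<le> level w"
      using deepest_w[OF P'(1,2)] deepest_in level_le_deepest by auto
    \<comment> \<open>A maximal clique through \<open>u\<close> and \<open>w\<close> also reaches below \<open>w\<close>, so it is \<open>P'\<close>.\<close>
    obtain K k where K: "is_max_clique V adj K" "u \<in> K" "w \<in> K" "k \<in> K" "level k < level w"
    proof (cases "level u = 0")
      case True
      obtain K where "is_max_clique V adj K" "u \<in> K" "w \<in> K"
        using ex_max_clique_edge[OF adj_w(1)] by blast
      with True False \<open>level v \<le> level w\<close> that show ?thesis by simp
    next
      case False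
      then obtain P p where "is_max_clique V adj P" "u \<in> P" "p \<in> P" "level p < level u"
        using ex_lower_max_clique by blast
      with deepest_w deepest_in \<open>level v \<le> level w\<close> assms(6) that show ?thesis
        by (metis order.strict_trans2 order.trans)
    qed
    have "K = P'"
      using lower_max_clique_unique[OF K(1) P'(1) K(3) w_P' K(4) P'(3) K(5)] P'(4)
        \<open>level v \<le> level w\<close> by linarith
    then show False
      using max_clique_adj[OF P'(1)] K(2) P'(2) assms(4,5) by blast
  qed
qed

lemma deepest_code_LD:
  assumes "identifiable V adj"
  shows "LD_code V adj deepest_code"
  unfolding LD_code_def
proof (intro conjI ballI impI)
  show "deepest_code \<subseteq> V"
    by (rule deepest_code_subset)
next
  fix u assume "u \<in> V"
  then obtain Q where "is_max_clique V adj Q" "u \<in> Q"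
    using ex_max_clique_vertex by blast
  then show "closed_nbhd V adj u \<inter> deepest_code \<noteq> {}"
    using deepest_code_nbhd unfolding closed_nbhd_def by (cases "u \<in> deepest_code") auto
next
  fix u v assume u: "u \<in> V - deepest_code" and v: "v \<in> V - deepest_code" and "u \<noteq> v"
  show "open_nbhd V adj u \<inter> deepest_code \<noteq> open_nbhd V adj v \<inter> deepest_code"
  proof (cases "adj u v")
    case True
    have "closed_nbhd V adj u \<noteq> closed_nbhd V adj v"
      using assms u v \<open>u \<noteq> v\<close> unfolding identifiable_def by blast
    then obtain w where w: "w \<in> closed_nbhd V adj u \<longleftrightarrow> w \<notin> closed_nbhd V adj v"
      by blast
    have "u \<in> closed_nbhd V adj v" "v \<in> closed_nbhd V adj u"
      using True adj_sym adj_in_V unfolding closed_nbhd_def open_nbhd_def by auto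
    then have "w \<noteq> u" "w \<noteq> v" "adj u w \<longleftrightarrow> \<not> adj v w"
      using w adj_in_V unfolding closed_nbhd_def open_nbhd_def by auto
    then show ?thesis
      using deepest_code_separates_adjacent[of u v w] deepest_code_separates_adjacent[of v u w]
        True u v adj_sym by blast
  next
    case False
    then show ?thesis
      using deepest_code_separates_nonadjacent[of u v] deepest_code_separates_nonadjacent[of v u]
        u v \<open>u \<noteq> v\<close> adj_sym by (cases "level u \<le> level v") auto
  qed
qed

end

theorem theorem2p3:
  fixes V :: "'a set" and adj :: "'a \<Rightarrow> 'a \<Rightarrow> bool"
  assumes "block_graph V adj"
  shows "(identifiable V adj \<longrightarrow> gamma_LD V adj \<le> n_Q V adj)
       \<and> (\<not> identifiable V adj \<longrightarrow> gamma_LD V adj \<le> card V - 1)"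
proof -
  interpret bgraph V adj
    using assms unfolding block_graph_def by unfold_locales auto
  show ?thesis
  proof (intro conjI impI)
    assume "identifiable V adj"
    then have "gamma_LD V adj \<le> card deepest_code"
      using gamma_LD_le[OF finite_V deepest_code_LD] by simp
    then show "gamma_LD V adj \<le> n_Q V adj"
      using card_deepest_code by simp
  next
    assume "\<not> identifiable V adj"
    then obtain u v where "adj u v"
      by (rule not_identifiable_ex_adj)
    then have "gamma_LD V adj \<le> card (V - {u})"
      using gamma_LD_le[OF finite_V LD_code_remove_vertex] by simp
    then show "gamma_LD V adj \<le> card V - 1"
      using \<open>adj u v\<close> adj_in_V finite_V by simp
  qed
qed

end
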